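(* Let $A,B>0$, $0<\alpha\le1+\sqrt3$, and $p(x)=\frac{B}{12}[x^4-2A(2+\alpha)x^3+6A^2(1+\alpha)x^2]$. Then there exists $c>0$ independent of $A$ and $B$ such that $p((1+\alpha)A)\ge p(A)\ge cBA^4$. *)

theory Defs
  imports Complex_Main
begin

definition p42 :: "real \<Rightarrow> real \<Rightarrow> real \<Rightarrow> real \<Rightarrow> real" where
  "p42 A B \<alpha> x = B / 12 * (x ^ 4 - 2 * A * (2 + \<alpha>) * x ^ 3 + 6 * A ^ 2 * (1 + \<alpha>) * x ^ 2)"

end

theory Submission
  imports Defs
begin

text \<open>Both values are multiples of \<open>B A\<^sup>4\<close>: \<open>p(A) = (3 + 4\<alpha>) B A\<^sup>4 / 12\<close> and
  \<open>p((1+\<alpha>)A) = (1+\<alpha>)\<^sup>3 (3 - \<alpha>) B A\<^sup>4 / 12\<close>. Their coefficients differ by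
  \<open>\<alpha> (4 + 6\<alpha> - \<alpha>\<^sup>3) = -\<alpha> (\<alpha> + 2) (\<alpha> - 1 - \<surd>3) (\<alpha> - 1 + \<surd>3)\<close>, which is nonnegative
  exactly up to \<open>\<alpha> = 1 + \<surd>3\<close>; so \<open>c = (3 + 4\<alpha>)/12\<close> works.\<close>

lemma p42_at_A: "p42 A B \<alpha> A = (3 + 4 * \<alpha>) / 12 * B * A ^ 4"
  unfolding p42_def by (simp add: algebra_simps power2_eq_square power3_eq_cube power4_eq_xxxx)

lemma p42_at_scaled_A:
  "p42 A B \<alpha> ((1 + \<alpha>) * A) = (1 + \<alpha>) ^ 3 * (3 - \<alpha>) / 12 * B * A ^ 4"
  unfolding p42_def by (simp add: algebra_simps power2_eq_square power3_eq_cube power4_eq_xxxx)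

lemma cubic_nonpos_between_roots:
  fixes \<alpha> :: real
  assumes "1 - sqrt 3 \<le> \<alpha>" and "\<alpha> \<le> 1 + sqrt 3"
  shows "\<alpha> ^ 3 - 6 * \<alpha> - 4 \<le> 0"
proof -
  have factored: "\<alpha> ^ 3 - 6 * \<alpha> - 4 = (\<alpha> + 2) * ((\<alpha> - 1 - sqrt 3) * (\<alpha> - 1 + sqrt 3))"
    by (simp add: algebra_simps power2_eq_square power3_eq_cube)
  have "sqrt 3 \<le> 3"
    using real_sqrt_le_mono[of 3 9] by simp
  then have "\<alpha> + 2 \<ge> 0"
    using assms(1) by linarith
  moreover have "(\<alpha> - 1 - sqrt 3) * (\<alpha> - 1 + sqrt 3) \<le> 0"
    using assms by (intro mult_nonpos_nonneg) auto
  ultimately show ?thesis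
    unfolding factored by (rule mult_nonneg_nonpos)
qed

lemma p42_coefficients_le:
  fixes \<alpha> :: real
  assumes "0 \<le> \<alpha>" and "\<alpha> \<le> 1 + sqrt 3"
  shows "3 + 4 * \<alpha> \<le> (1 + \<alpha>) ^ 3 * (3 - \<alpha>)"
proof -
  have "\<alpha> ^ 3 - 6 * \<alpha> - 4 \<le> 0"
    using assms by (intro cubic_nonpos_between_roots) (auto intro: order_trans[of _ 0])
  then have "0 \<le> \<alpha> * (4 + 6 * \<alpha> - \<alpha> ^ 3)"
    using assms(1) by simp
  also have "\<dots> = (1 + \<alpha>) ^ 3 * (3 - \<alpha>) - (3 + 4 * \<alpha>)"
    by (simp add: algebra_simps power2_eq_square power3_eq_cube power4_eq_xxxx)
  finally show ?thesis by simp
qed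

theorem proposition4p2:
  fixes \<alpha> :: real
  assumes "0 < \<alpha>" and "\<alpha> \<le> 1 + sqrt 3"
  shows "\<exists>c>0. \<forall>A B :: real. A > 0 \<longrightarrow> B > 0 \<longrightarrow>
           p42 A B \<alpha> ((1 + \<alpha>) * A) \<ge> p42 A B \<alpha> A \<and> p42 A B \<alpha> A \<ge> c * B * A ^ 4"
proof (intro exI[of _ "(3 + 4 * \<alpha>) / 12"] conjI allI impI)
  show "0 < (3 + 4 * \<alpha>) / 12"
    using assms(1) by simp
  fix A B :: real
  assume "A > 0" and "B > 0"
  then have "0 \<le> B * A ^ 4 / 12"
    by simp
  with p42_coefficients_le[of \<alpha>] assms
  have "(3 + 4 * \<alpha>) * (B * A ^ 4 / 12) \<le> (1 + \<alpha>) ^ 3 * (3 - \<alpha>) * (B * A ^ 4 / 12)"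
    by (intro mult_right_mono) auto
  then show "p42 A B \<alpha> A \<le> p42 A B \<alpha> ((1 + \<alpha>) * A)"
    unfolding p42_at_A p42_at_scaled_A by (simp add: field_simps)
  show "(3 + 4 * \<alpha>) / 12 * B * A ^ 4 \<le> p42 A B \<alpha> A"
    unfolding p42_at_A by simp
qed

end
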